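(* Let $n$ be a positive integer, and consider the one-way communication problem "evaluate $f$ with domain $[n]$ on $0$". Let $\mathcal{P}$ be any protocol for this problem in which Bob always outputs the correct answer. Then there is some input on which Alice's message in $\mathcal{P}$ contains at least $n\log_2 n$ bits.
   Context: Notation: $[n]=\{0,\dots,n-1\}$. The communication problem "evaluate $f$ with domain $[n]$ on $0$" is set up as follows. Let $k_0,\dots,k_{n-1}$ be any permutation of $[n]$, and let $v_0,\dots,v_{n-1}$ be any sequence of elements of $[n]$. These two sequences represent the function $f$ with $f(k_i)=v_i$. - Alice knows $v_0,\dots,v_{n-1}$, and Bob knows $k_0,\dots,k_{n-1}$. - Alice sends a single message to Bob, which may depend only on her input. - Bob, using the message and his own input, must output the $v_j$ such that $k_j=0$. *)

theory Defs
  imports Complex_Main "HOL-Library.Sublist"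
begin

definition alice_inputs :: "nat \<Rightarrow> nat list set" where
  "alice_inputs n = {v. length v = n \<and> set v \<subseteq> {..<n}}"

definition bob_inputs :: "nat \<Rightarrow> nat list set" where
  "bob_inputs n = {k. length k = n \<and> distinct k \<and> set k = {..<n}}"

text \<open>A one-way protocol is a pair (msg, out): Alice sends the bit string msg v,
  Bob outputs out m k. It is correct if Bob always outputs v_j where k_j = 0.\<close>
definition eval_at_zero_correct ::
  "nat \<Rightarrow> (nat list \<Rightarrow> bool list) \<Rightarrow> (bool list \<Rightarrow> nat list \<Rightarrow> nat) \<Rightarrow> bool" where
  "eval_at_zero_correct n msg out \<longleftrightarrow>
     (\<forall>v\<in>alice_inputs n. \<forall>k\<in>bob_inputs n. \<forall>j<n. k ! j = 0 \<longrightarrow> out (msg v) k = v ! j)"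

text \<open>Messages are self-delimiting: no message is a proper prefix of another.\<close>
definition prefix_free_messages ::
  "nat \<Rightarrow> (nat list \<Rightarrow> bool list) \<Rightarrow> bool" where
  "prefix_free_messages n msg \<longleftrightarrow>
     (\<forall>v\<in>alice_inputs n. \<forall>w\<in>alice_inputs n. prefix (msg v) (msg w) \<longrightarrow> msg v = msg w)"

end

theory Submission
  imports Defs
begin

text \<open>Since Bob may hold any permutation, each position of Alice's sequence is queried by some
  Bob input, so a correct protocol must send different messages for different sequences. There are
  \<open>n^n\<close> sequences, and a prefix-free set of binary strings of length at most \<open>m\<close> has at most
  \<open>2^m\<close> elements (pad every string to length \<open>m\<close>). Hence the longest message has length at least
  \<open>log\<^sub>2 (n^n) = n log\<^sub>2 n\<close>.\<close>

lemma card_prefix_free_le: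
  fixes S :: "'a::finite list set"
  assumes prefix_free: "\<And>xs ys. xs \<in> S \<Longrightarrow> ys \<in> S \<Longrightarrow> prefix xs ys \<Longrightarrow> xs = ys"
    and bounded: "\<And>xs. xs \<in> S \<Longrightarrow> length xs \<le> m"
  shows "card S \<le> card (UNIV :: 'a set) ^ m"
proof -
  define pad where "pad xs = xs @ replicate (m - length xs) undefined" for xs :: "'a list"
  have "inj_on pad S"
  proof (rule inj_onI)
    fix xs ys assume "xs \<in> S" "ys \<in> S" "pad xs = pad ys"
    then have "prefix xs ys \<or> prefix ys xs"
      unfolding pad_def by (metis prefix_def prefix_same_cases)
    then show "xs = ys" using prefix_free \<open>xs \<in> S\<close> \<open>ys \<in> S\<close> by metis
  qed
  moreover have "pad ` S \<subseteq> {xs. set xs \<subseteq> UNIV \<and> length xs = m}"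
    using bounded unfolding pad_def by auto
  ultimately have "card S \<le> card {xs. set xs \<subseteq> (UNIV :: 'a set) \<and> length xs = m}"
    by (intro card_inj_on_le finite_lists_length_eq) auto
  then show ?thesis using card_lists_length_eq[of "UNIV :: 'a set" m] by simp
qed

lemma finite_alice_inputs: "finite (alice_inputs n)"
  and card_alice_inputs: "card (alice_inputs n) = n ^ n"
  using finite_lists_length_eq[of "{..<n}" n] card_lists_length_eq[of "{..<n}" n]
  unfolding alice_inputs_def by (simp_all add: conj_commute)

lemma bob_input_with_zero_at:
  assumes "i < n"
  shows "\<exists>k\<in>bob_inputs n. k ! i = 0"
proof -
  define swap where "swap j = (if j = i then 0 else if j = 0 then i else j)" for j :: nat
  define k where "k = map swap [0..<n]"
  have "inj swap" "swap ` {..<n} = {..<n}"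
    unfolding swap_def inj_def using assms by (auto simp: image_iff)
  then have "length k = n" "set k = {..<n}" "distinct k"
    unfolding k_def by (simp_all add: lessThan_atLeast0 distinct_map inj_on_subset[of swap UNIV])
  moreover have "k ! i = 0"
    unfolding k_def swap_def using assms by simp
  ultimately show ?thesis
    unfolding bob_inputs_def by blast
qed

lemma inj_on_msg_if_correct:
  assumes "eval_at_zero_correct n msg out"
  shows "inj_on msg (alice_inputs n)"
proof (rule inj_onI)
  fix v w assume v: "v \<in> alice_inputs n" and w: "w \<in> alice_inputs n" and "msg v = msg w"
  show "v = w"
  proof (rule nth_equalityI)
    show "length v = length w" using v w by (simp add: alice_inputs_def)
  next
    fix i assume "i < length v"
    then have "i < n" using v by (simp add: alice_inputs_def)
    then obtain k where "k \<in> bob_inputs n" "k ! i = 0"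
      using bob_input_with_zero_at by blast
    then have "out (msg v) k = v ! i" "out (msg w) k = w ! i"
      using assms v w \<open>i < n\<close> unfolding eval_at_zero_correct_def by blast+
    then show "v ! i = w ! i" using \<open>msg v = msg w\<close> by simp
  qed
qed

theorem lemma1:
  fixes n :: nat
    and msg :: "nat list \<Rightarrow> bool list"
    and out :: "bool list \<Rightarrow> nat list \<Rightarrow> nat"
  assumes "n \<ge> 1"
    and "prefix_free_messages n msg"
    and "eval_at_zero_correct n msg out"
  shows "\<exists>v\<in>alice_inputs n. real (length (msg v)) \<ge> real n * log 2 (real n)"
proof -
  let ?A = "alice_inputs n"
  have "?A \<noteq> {}" using card_alice_inputs[of n] \<open>n \<ge> 1\<close> by auto
  then obtain v where "v \<in> ?A" and v_max: "Max ((\<lambda>w. length (msg w)) ` ?A) = length (msg v)"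
    using obtains_MAX[OF finite_alice_inputs] by blast
  have longest: "length (msg w) \<le> length (msg v)" if "w \<in> ?A" for w
    using that v_max finite_alice_inputs by (metis Max_ge finite_imageI imageI)
  have "card (msg ` ?A) \<le> 2 ^ length (msg v)"
    using card_prefix_free_le[of "msg ` ?A" "length (msg v)"] longest \<open>prefix_free_messages n msg\<close>
    unfolding prefix_free_messages_def by auto
  then have "n ^ n \<le> 2 ^ length (msg v)"
    using inj_on_msg_if_correct[OF \<open>eval_at_zero_correct n msg out\<close>]
    by (simp add: card_image card_alice_inputs)
  then have "log 2 (real (n ^ n)) \<le> length (msg v)"
    using \<open>n \<ge> 1\<close> by (intro log2_of_power_le) auto
  then show ?thesis
    using \<open>v \<in> ?A\<close> \<open>n \<ge> 1\<close> by (auto simp: log_nat_power)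
qed

end
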